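(* Consider the family of differential operators $T_\lambda=Q_2(z)\frac{d^2}{dz^2}+(Q_1(z)\lambda+P_1(z))\frac{d}{dz}+(\lambda^2+p\lambda+q)Q_0$ depending on $\lambda\in\mathbb C$, and assume it is of generic type. Then there exists a positive integer $N$ such that for every integer $n\ge N$ there are two values $\lambda_{1,n},\lambda_{2,n}$ of $\lambda$ for which $T_\lambda(y)=0$ has a polynomial solution of degree $n$, and $\lim_{n\to\infty}\lambda_{i,n}/n=\alpha_i$ ($i=1,2$), where $\alpha_1,\alpha_2$ are the roots of the characteristic polynomial $q_{22}+q_{11}t+q_{00}t^2$.
   Context: Here $Q_2$ is a polynomial of degree $2$, $Q_1,P_1$ are polynomials of degree at most $1$, $Q_0$ is a nonzero constant, $p,q\in\mathbb C$. Write $Q_i(z)=\sum_{j=0}^iq_{ji}z^j$ ($i=0,1,2$), with $q_{22}\ne0$, $q_{00}=Q_0\ne0$. The characteristic polynomial of $T_\lambda$ is $q_{22}+q_{11}t+q_{00}t^2$; the family is of generic type if its two roots have distinct arguments. *)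

theory Defs
  imports "HOL-Analysis.Analysis" "HOL-Computational_Algebra.Polynomial"
begin

definition T_op :: "complex poly \<Rightarrow> complex poly \<Rightarrow> complex poly \<Rightarrow> complex poly
    \<Rightarrow> complex \<Rightarrow> complex \<Rightarrow> complex \<Rightarrow> complex poly \<Rightarrow> complex poly" where
  "T_op Q2 Q1 P1 Q0 p q lam y =
     Q2 * pderiv (pderiv y) + (smult lam Q1 + P1) * pderiv y
     + smult (lam\<^sup>2 + p * lam + q) (Q0 * y)"

definition char_poly :: "complex poly \<Rightarrow> complex poly \<Rightarrow> complex poly \<Rightarrow> complex poly" where
  "char_poly Q2 Q1 Q0 = [:coeff Q2 2, coeff Q1 1, coeff Q0 0:]"

end

(*
  In the monomial basis T_op is triangular: it maps z^n to T_diag ... lam n * z^n plus terms of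
  lower degree. So a polynomial solution of degree n exists as soon as T_diag ... lam n = 0 while
  T_diag ... lam k <> 0 for all k < n. Writing a, b for the characteristic roots alpha1, alpha2,
  we have q22 = q00 a b and q11 = -q00 (a + b), so the quadratic lam |-> T_diag ... lam n,
  rescaled by lam = n mu, behaves like q00 n^2 (mu - a) (mu - b); hence its two roots can be
  chosen with lam1 n / n -> a and lam2 n / n -> b.
  If moreover T_diag ... (lam1 n) k = 0 for some k < n, subtracting the two equations and dividing
  by n gives a (s b - a) -> 0 with s = k / n in [0, 1]. This is excluded by the generic-type
  condition Arg a <> Arg b, which keeps a at positive distance from the segment [0, b].
*)
theory Submission
  imports Defs
begin

definition T_diag :: "complex poly \<Rightarrow> complex poly \<Rightarrow> complex poly \<Rightarrow> complex poly
    \<Rightarrow> complex \<Rightarrow> complex \<Rightarrow> complex \<Rightarrow> nat \<Rightarrow> complex" where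
  "T_diag Q2 Q1 P1 Q0 p q lam n =
     coeff Q2 2 * of_nat n * (of_nat n - 1) + (lam * coeff Q1 1 + coeff P1 1) * of_nat n
     + coeff Q0 0 * (lam\<^sup>2 + p * lam + q)"

lemma T_op_add:
  "T_op Q2 Q1 P1 Q0 p q lam (y + z) = T_op Q2 Q1 P1 Q0 p q lam y + T_op Q2 Q1 P1 Q0 p q lam z"
  unfolding T_op_def by (simp add: pderiv_add algebra_simps smult_add_right)

lemma degree_le_2_id: "degree (p :: 'a::zero poly) \<le> 2 \<Longrightarrow> [:coeff p 0, coeff p 1, coeff p 2:] = p"
  by (auto simp: poly_eq_iff coeff_pCons coeff_eq_0 numeral_2_eq_2 split: nat.splits)

lemma degree_le_1_id: "degree (p :: 'a::zero poly) \<le> 1 \<Longrightarrow> [:coeff p 0, coeff p 1:] = p"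
  by (auto simp: poly_eq_iff coeff_pCons coeff_eq_0 split: nat.splits)

context
  fixes Q2 Q1 P1 Q0 :: "complex poly" and p q :: complex
  assumes deg_Q2: "degree Q2 \<le> 2" and deg_Q1: "degree Q1 \<le> 1"
    and deg_P1: "degree P1 \<le> 1" and deg_Q0: "degree Q0 = 0"
begin

lemma coeff_T_op:
  "coeff (T_op Q2 Q1 P1 Q0 p q lam y) i =
     T_diag Q2 Q1 P1 Q0 p q lam i * coeff y i
     + (coeff Q2 1 * of_nat i * of_nat (i + 1) + (lam * coeff Q1 0 + coeff P1 0) * of_nat (i + 1))
       * coeff y (i + 1)
     + coeff Q2 0 * of_nat (i + 1) * of_nat (i + 2) * coeff y (i + 2)"
proof -
  have "T_op Q2 Q1 P1 Q0 p q lam y =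
      T_op [:coeff Q2 0, coeff Q2 1, coeff Q2 2:] [:coeff Q1 0, coeff Q1 1:]
        [:coeff P1 0, coeff P1 1:] [:coeff Q0 0:] p q lam y"
    using degree_le_2_id[OF deg_Q2] degree_le_1_id[OF deg_Q1] degree_le_1_id[OF deg_P1]
      degree_0_id[OF deg_Q0] by simp
  then show ?thesis
    unfolding T_diag_def T_op_def
    by (cases i; cases "i - 1") (auto simp: coeff_pderiv coeff_pCons algebra_simps)
qed

lemma coeff_T_op_eq_0:
  assumes "\<forall>j\<ge>k. coeff y j = 0" and "i \<ge> k"
  shows "coeff (T_op Q2 Q1 P1 Q0 p q lam y) i = 0"
  using assms by (simp add: coeff_T_op)

lemma coeff_T_op_top:
  assumes "\<forall>j>k. coeff y j = 0"
  shows "coeff (T_op Q2 Q1 P1 Q0 p q lam y) k = T_diag Q2 Q1 P1 Q0 p q lam k * coeff y k"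
  using assms by (simp add: coeff_T_op)

lemma T_op_solvable_below:
  assumes "\<forall>j<k. T_diag Q2 Q1 P1 Q0 p q lam j \<noteq> 0" and "\<forall>i\<ge>k. coeff r i = 0"
  shows "\<exists>z. (\<forall>i\<ge>k. coeff z i = 0) \<and> T_op Q2 Q1 P1 Q0 p q lam z = r"
  using assms
proof (induction k arbitrary: r)
  case 0
  then show ?case
    by (auto intro!: exI[of _ 0] simp: poly_eq_iff T_op_def)
next
  case (Suc k)
  let ?T = "T_op Q2 Q1 P1 Q0 p q lam"
  let ?d = "T_diag Q2 Q1 P1 Q0 p q lam k"
  define z0 where "z0 = monom (coeff r k / ?d) k"
  have z0_above: "\<forall>i\<ge>Suc k. coeff z0 i = 0"
    by (simp add: z0_def coeff_monom)
  have "coeff (r - ?T z0) i = 0" if "i \<ge> k" for i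
  proof (cases "i = k")
    case True
    then show ?thesis
      using coeff_T_op_top[of k z0] Suc.prems(1) by (simp add: z0_def coeff_monom)
  next
    case False
    then show ?thesis
      using that Suc.prems(2) coeff_T_op_eq_0[OF z0_above, of i] by simp
  qed
  then obtain z1 where "\<forall>i\<ge>k. coeff z1 i = 0" and "?T z1 = r - ?T z0"
    using Suc.IH Suc.prems(1) by (meson less_SucI)
  then show ?case
    using z0_above by (intro exI[of _ "z0 + z1"]) (auto simp: T_op_add)
qed

lemma T_op_polynomial_solution:
  assumes "T_diag Q2 Q1 P1 Q0 p q lam n = 0" and "\<forall>j<n. T_diag Q2 Q1 P1 Q0 p q lam j \<noteq> 0"
  shows "\<exists>y. degree y = n \<and> T_op Q2 Q1 P1 Q0 p q lam y = 0"
proof -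
  let ?T = "T_op Q2 Q1 P1 Q0 p q lam"
  have monom_above: "\<forall>i\<ge>Suc n. coeff (monom 1 n :: complex poly) i = 0"
    by (simp add: coeff_monom)
  have "coeff (- ?T (monom 1 n)) i = 0" if "i \<ge> n" for i
    using that coeff_T_op_top[of n "monom 1 n"] coeff_T_op_eq_0[OF monom_above, of i] assms(1)
    by (cases "i = n") (simp_all add: coeff_monom)
  then obtain z where z_below: "\<forall>i\<ge>n. coeff z i = 0" and "?T z = - ?T (monom 1 n)"
    using T_op_solvable_below[OF assms(2)] by blast
  then have "?T (monom 1 n + z) = 0"
    by (simp add: T_op_add)
  moreover have "degree (monom 1 n + z) = n"
  proof (rule antisym)
    show "degree (monom 1 n + z) \<le> n"
      using z_below by (intro degree_le) (auto simp: coeff_monom)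
    show "n \<le> degree (monom 1 n + z)"
      using z_below by (intro le_degree) (simp add: coeff_monom)
  qed
  ultimately show ?thesis by blast
qed

lemma eventually_polynomial_solution:
  assumes "\<forall>\<^sub>F n in sequentially. \<forall>k<n. T_diag Q2 Q1 P1 Q0 p q (lam n) k \<noteq> 0"
    and "\<And>n. n > 0 \<Longrightarrow> T_diag Q2 Q1 P1 Q0 p q (lam n) n = 0"
  shows "\<forall>\<^sub>F n in sequentially. \<exists>y. degree y = n \<and> T_op Q2 Q1 P1 Q0 p q (lam n) y = 0"
  using assms(1) eventually_gt_at_top[of 0]
  by eventually_elim (use assms(2) in \<open>auto intro: T_op_polynomial_solution\<close>)

end

text \<open>The discriminant divided by (a - b)^2 tends to 1, where csqrt is continuous; this picks
  the square root that tells the two roots apart consistently along the sequence.\<close>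
lemma monic_quadratic_root_sequences:
  fixes \<beta> \<gamma> :: "nat \<Rightarrow> complex"
  assumes "a \<noteq> b" and \<beta>: "\<beta> \<longlonglongrightarrow> -(a + b)" and \<gamma>: "\<gamma> \<longlonglongrightarrow> a * b"
  obtains \<mu>1 \<mu>2 where "\<And>n. (\<mu>1 n)\<^sup>2 + \<beta> n * \<mu>1 n + \<gamma> n = 0"
    and "\<And>n. (\<mu>2 n)\<^sup>2 + \<beta> n * \<mu>2 n + \<gamma> n = 0"
    and "\<mu>1 \<longlonglongrightarrow> a" and "\<mu>2 \<longlonglongrightarrow> b"
proof -
  define w where "w = a - b"
  have w: "w \<noteq> 0" using assms(1) by (simp add: w_def)
  define s where "s n = w * csqrt (((\<beta> n)\<^sup>2 - 4 * \<gamma> n) / w\<^sup>2)" for n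
  have s_square: "(s n)\<^sup>2 = (\<beta> n)\<^sup>2 - 4 * \<gamma> n" for n
    using w by (simp add: s_def power_mult_distrib)
  have "(\<lambda>n. ((\<beta> n)\<^sup>2 - 4 * \<gamma> n) / w\<^sup>2) \<longlonglongrightarrow> ((-(a + b))\<^sup>2 - 4 * (a * b)) / w\<^sup>2"
    using w by (intro tendsto_intros \<beta> \<gamma>) simp
  also have "(-(a + b))\<^sup>2 - 4 * (a * b) = w\<^sup>2"
    by (simp add: w_def power2_eq_square algebra_simps)
  also have "w\<^sup>2 / w\<^sup>2 = 1"
    using w by simp
  finally have "(\<lambda>n. csqrt (((\<beta> n)\<^sup>2 - 4 * \<gamma> n) / w\<^sup>2)) \<longlonglongrightarrow> csqrt 1"
    by (rule isCont_tendsto_compose[OF continuous_at_csqrt, rotated]) simp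
  then have s: "s \<longlonglongrightarrow> w"
    unfolding s_def using tendsto_mult_left[where c = w] by fastforce
  show ?thesis
  proof
    show "((- \<beta> n + s n) / 2)\<^sup>2 + \<beta> n * ((- \<beta> n + s n) / 2) + \<gamma> n = 0" for n
      using s_square[of n] by (simp add: power2_eq_square field_simps) algebra
    show "((- \<beta> n - s n) / 2)\<^sup>2 + \<beta> n * ((- \<beta> n - s n) / 2) + \<gamma> n = 0" for n
      using s_square[of n] by (simp add: power2_eq_square field_simps)
    have "(\<lambda>n. (- \<beta> n + s n) / 2) \<longlonglongrightarrow> (- (-(a + b)) + w) / 2"
      by (intro tendsto_intros \<beta> s) simp
    then show "(\<lambda>n. (- \<beta> n + s n) / 2) \<longlonglongrightarrow> a"
      by (simp add: w_def field_simps)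
    have "(\<lambda>n. (- \<beta> n - s n) / 2) \<longlonglongrightarrow> (- (-(a + b)) - w) / 2"
      by (intro tendsto_intros \<beta> s) simp
    then show "(\<lambda>n. (- \<beta> n - s n) / 2) \<longlonglongrightarrow> b"
      by (simp add: w_def field_simps)
  qed
qed

lemma T_diag_diff:
  "T_diag Q2 Q1 P1 Q0 p q lam n - T_diag Q2 Q1 P1 Q0 p q lam k =
     (of_nat n - of_nat k) * (coeff Q2 2 * (of_nat n + of_nat k - 1) + lam * coeff Q1 1 + coeff P1 1)"
  by (simp add: T_diag_def algebra_simps power2_eq_square)

lemma notin_closed_segment_0_if_Arg_neq:
  fixes a b :: complex
  assumes "a \<noteq> 0" and "Arg a \<noteq> Arg b"
  shows "a \<notin> closed_segment 0 b"
proof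
  assume "a \<in> closed_segment 0 b"
  then obtain u where "0 \<le> u" and a_eq: "a = of_real u * b"
    by (auto simp: in_segment scaleR_conv_of_real)
  with assms(1) have "u > 0" by auto
  then show False
    using assms(2) by (simp add: a_eq Arg_times_of_real)
qed

context
  fixes Q2 Q1 P1 Q0 :: "complex poly" and p q a b :: complex
  assumes Q0: "coeff Q0 0 \<noteq> 0"
    and q22: "coeff Q2 2 = coeff Q0 0 * a * b" and q11: "coeff Q1 1 = - coeff Q0 0 * (a + b)"
begin

lemma eigenvalue_sequences:
  assumes "a \<noteq> b"
  obtains lam1 lam2 where "\<And>n. n > 0 \<Longrightarrow> T_diag Q2 Q1 P1 Q0 p q (lam1 n) n = 0"
    and "\<And>n. n > 0 \<Longrightarrow> T_diag Q2 Q1 P1 Q0 p q (lam2 n) n = 0"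
    and "(\<lambda>n. lam1 n / of_nat n) \<longlonglongrightarrow> a" and "(\<lambda>n. lam2 n / of_nat n) \<longlonglongrightarrow> b"
proof -
  define c where "c = coeff P1 1 / coeff Q0 0"
  define \<beta> where "\<beta> n = -(a + b) + p * (1 / of_nat n)" for n :: nat
  define \<gamma> where "\<gamma> n = a * b - (a * b - c) * (1 / of_nat n) + q * (1 / of_nat n)\<^sup>2" for n :: nat
  have "\<beta> \<longlonglongrightarrow> -(a + b) + p * 0"
    unfolding \<beta>_def by (intro tendsto_intros lim_1_over_n)
  then have \<beta>: "\<beta> \<longlonglongrightarrow> -(a + b)" by simp
  have "\<gamma> \<longlonglongrightarrow> a * b - (a * b - c) * 0 + q * 0\<^sup>2"
    unfolding \<gamma>_def by (intro tendsto_intros lim_1_over_n)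
  then have \<gamma>: "\<gamma> \<longlonglongrightarrow> a * b" by simp
  obtain \<mu>1 \<mu>2 where
    roots: "\<And>n. (\<mu>1 n)\<^sup>2 + \<beta> n * \<mu>1 n + \<gamma> n = 0" "\<And>n. (\<mu>2 n)\<^sup>2 + \<beta> n * \<mu>2 n + \<gamma> n = 0"
    and lim: "\<mu>1 \<longlonglongrightarrow> a" "\<mu>2 \<longlonglongrightarrow> b"
    using monic_quadratic_root_sequences[OF assms \<beta> \<gamma>] by blast
  have scaled: "T_diag Q2 Q1 P1 Q0 p q (of_nat n * \<mu>) n
      = coeff Q0 0 * (of_nat n)\<^sup>2 * (\<mu>\<^sup>2 + \<beta> n * \<mu> + \<gamma> n)" if "n > 0" for n \<mu>
    using that Q0 unfolding T_diag_def q22 q11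
    by (simp add: \<beta>_def \<gamma>_def c_def power2_eq_square field_simps)
  have rescale: "(\<lambda>n. of_nat n * \<mu> n / of_nat n) \<longlonglongrightarrow> l" if "\<mu> \<longlonglongrightarrow> l" for \<mu> :: "nat \<Rightarrow> complex" and l
  proof (rule Lim_transform_eventually[OF that])
    show "\<forall>\<^sub>F n in sequentially. \<mu> n = of_nat n * \<mu> n / of_nat n"
      using eventually_gt_at_top[of 0] by eventually_elim simp
  qed
  show ?thesis
  proof (rule that[of "\<lambda>n. of_nat n * \<mu>1 n" "\<lambda>n. of_nat n * \<mu>2 n"])
    show "T_diag Q2 Q1 P1 Q0 p q (of_nat n * \<mu>1 n) n = 0"
      and "T_diag Q2 Q1 P1 Q0 p q (of_nat n * \<mu>2 n) n = 0" if "n > 0" for n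
      using that by (simp_all add: scaled roots)
  qed (use rescale lim in blast)+
qed

lemma eventually_T_diag_nonzero_below:
  assumes seg: "a \<notin> closed_segment 0 b" and lim: "(\<lambda>n. lam n / of_nat n) \<longlonglongrightarrow> a"
    and root: "\<And>n. n > 0 \<Longrightarrow> T_diag Q2 Q1 P1 Q0 p q (lam n) n = 0"
  shows "\<forall>\<^sub>F n in sequentially. \<forall>k<n. T_diag Q2 Q1 P1 Q0 p q (lam n) k \<noteq> 0"
proof -
  define c where "c = coeff P1 1 / coeff Q0 0 - a * b"
  define m where "m = infdist a (closed_segment 0 b)"
  have a: "a \<noteq> 0" using seg by auto
  have m: "m > 0" unfolding m_def using seg by (intro infdist_pos_not_in_closed) auto
  define \<epsilon> where "\<epsilon> n = norm (a + b) * norm (lam n / of_nat n - a) + norm c * (1 / real n)" for n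
  have "\<epsilon> \<longlonglongrightarrow> norm (a + b) * norm (a - a) + norm c * 0"
    unfolding \<epsilon>_def by (intro tendsto_intros lim lim_1_over_n)
  then have "\<forall>\<^sub>F n in sequentially. \<epsilon> n < norm a * m"
    using a m by (intro order_tendstoD(2)) auto
  with eventually_gt_at_top[of 0] show ?thesis
  proof eventually_elim
    case (elim n)
    show ?case
    proof (intro allI impI notI)
      fix k assume "k < n" and root_k: "T_diag Q2 Q1 P1 Q0 p q (lam n) k = 0"
      define s where "s = real k / real n"
      have "(of_nat n - of_nat k) * (coeff Q0 0 * a * b * (of_nat n + of_nat k - 1)
          + lam n * (- coeff Q0 0 * (a + b)) + coeff P1 1) = 0"
        using T_diag_diff[of Q2 Q1 P1 Q0 p q "lam n" n k, unfolded q22 q11] root_k root[OF elim(1)]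
        by simp
      then have "coeff Q0 0 * a * b * (of_nat n + of_nat k - 1) + lam n * (- coeff Q0 0 * (a + b))
          + coeff P1 1 = 0"
        using \<open>k < n\<close> by simp
      then have key: "a * (of_real s * b - a) = (a + b) * (lam n / of_nat n - a) - c / of_nat n"
        using elim(1) Q0 by (simp add: s_def c_def of_real_divide field_simps) algebra
      have "of_real s * b \<in> closed_segment 0 b"
        using \<open>k < n\<close> by (auto simp: in_segment scaleR_conv_of_real s_def intro!: exI[of _ s])
      then have "m \<le> norm (of_real s * b - a)"
        unfolding m_def by (metis dist_commute dist_norm infdist_le)
      then have "norm a * m \<le> norm (a * (of_real s * b - a))"
        by (simp add: norm_mult mult_left_mono)
      also have "\<dots> \<le> \<epsilon> n"
        unfolding key \<epsilon>_def
        by (rule order_trans[OF norm_triangle_ineq4]) (simp add: norm_mult norm_divide)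
      finally show False using elim(2) by simp
    qed
  qed
qed

end

theorem lemma9:
  fixes Q2 Q1 P1 Q0 :: "complex poly" and p q \<alpha>1 \<alpha>2 :: complex
  assumes "degree Q2 = 2" and "degree Q1 \<le> 1" and "degree P1 \<le> 1"
    and "degree Q0 = 0" and "Q0 \<noteq> 0"
    and roots: "char_poly Q2 Q1 Q0 = smult (coeff Q0 0) ([:-\<alpha>1, 1:] * [:-\<alpha>2, 1:])"
    and generic: "Arg \<alpha>1 \<noteq> Arg \<alpha>2"
  shows "\<exists>N::nat. N > 0 \<and> (\<exists>lam1 lam2 :: nat \<Rightarrow> complex.
           (\<forall>n\<ge>N. lam1 n \<noteq> lam2 n
              \<and> (\<exists>y. degree y = n \<and> T_op Q2 Q1 P1 Q0 p q (lam1 n) y = 0)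
              \<and> (\<exists>y. degree y = n \<and> T_op Q2 Q1 P1 Q0 p q (lam2 n) y = 0))
         \<and> (\<lambda>n. lam1 n / of_nat n) \<longlonglongrightarrow> \<alpha>1
         \<and> (\<lambda>n. lam2 n / of_nat n) \<longlonglongrightarrow> \<alpha>2)"
proof -
  have Q0: "coeff Q0 0 \<noteq> 0"
    using assms(4,5) leading_coeff_neq_0[of Q0] by simp
  have q22: "coeff Q2 2 = coeff Q0 0 * \<alpha>1 * \<alpha>2" and q11: "coeff Q1 1 = - coeff Q0 0 * (\<alpha>1 + \<alpha>2)"
    using roots by (simp_all add: char_poly_def algebra_simps)
  have "coeff Q2 2 \<noteq> 0"
    using assms(1) leading_coeff_neq_0[of Q2] by fastforce
  then have "\<alpha>1 \<noteq> 0" "\<alpha>2 \<noteq> 0" by (auto simp: q22)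
  with generic have seg: "\<alpha>1 \<notin> closed_segment 0 \<alpha>2" "\<alpha>2 \<notin> closed_segment 0 \<alpha>1"
    and "\<alpha>1 \<noteq> \<alpha>2" by (auto simp: notin_closed_segment_0_if_Arg_neq)
  obtain lam1 lam2 where root1: "\<And>n. n > 0 \<Longrightarrow> T_diag Q2 Q1 P1 Q0 p q (lam1 n) n = 0"
    and root2: "\<And>n. n > 0 \<Longrightarrow> T_diag Q2 Q1 P1 Q0 p q (lam2 n) n = 0"
    and lim1: "(\<lambda>n. lam1 n / of_nat n) \<longlonglongrightarrow> \<alpha>1" and lim2: "(\<lambda>n. lam2 n / of_nat n) \<longlonglongrightarrow> \<alpha>2"
    using eigenvalue_sequences[OF Q0 q22 q11 \<open>\<alpha>1 \<noteq> \<alpha>2\<close>] by blast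
  have deg_Q2: "degree Q2 \<le> 2" using assms(1) by simp
  note solution = eventually_polynomial_solution[OF deg_Q2 assms(2-4)]
  have "\<forall>\<^sub>F n in sequentially. lam1 n / of_nat n - lam2 n / of_nat n \<noteq> 0"
    using tendsto_diff[OF lim1 lim2] \<open>\<alpha>1 \<noteq> \<alpha>2\<close> by (intro tendsto_imp_eventually_ne) auto
  moreover have "\<forall>\<^sub>F n in sequentially. \<exists>y. degree y = n \<and> T_op Q2 Q1 P1 Q0 p q (lam1 n) y = 0"
    using solution[OF eventually_T_diag_nonzero_below[OF Q0 q22 q11 seg(1) lim1 root1] root1] .
  moreover have "\<forall>\<^sub>F n in sequentially. \<exists>y. degree y = n \<and> T_op Q2 Q1 P1 Q0 p q (lam2 n) y = 0"
    using eventually_T_diag_nonzero_below[of Q0 Q2 \<alpha>2 \<alpha>1 Q1 lam2 P1 p q] Q0 q22 q11 seg(2) lim2 root2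
    by (intro solution) (simp_all add: ac_simps)
  ultimately have "\<forall>\<^sub>F n in sequentially. n > 0 \<and> lam1 n \<noteq> lam2 n
      \<and> (\<exists>y. degree y = n \<and> T_op Q2 Q1 P1 Q0 p q (lam1 n) y = 0)
      \<and> (\<exists>y. degree y = n \<and> T_op Q2 Q1 P1 Q0 p q (lam2 n) y = 0)"
    using eventually_gt_at_top[of 0] by eventually_elim auto
  then show ?thesis
    using lim1 lim2 unfolding eventually_sequentially by (meson order_refl)
qed

end
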